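(* Let $m\ge 2$ be an integer and let $n$ be a positive integer with $m^j\le n<m^{j+1}$ for some integer $j\ge 0$, with base $m$ representation $n=\alpha_j m^j+\cdots+\alpha_1 m+\alpha_0$ ($\alpha_j>0$, $0\le\alpha_i\le m-1$). For an $m$-ary partition $\lambda=(\lambda_\ell,\ldots,\lambda_0)$ of $n$ (so $n=\sum_{i=0}^\ell \lambda_i m^i$, $\lambda_\ell>0$, $\lambda_i\ge 0$), setting $\lambda_k=0$ for $\ell<k\le j$, define $\varphi(\lambda)=(\beta_j,\beta_{j-1},\ldots,\beta_1)$ by \[ \beta_i=\sum_{k=i}^{j}m^{k-i}(\alpha_k-\lambda_k),\qquad 1\le i\le j. \] Then $\varphi$ is a bijection from the set $\mathcal{B}_m(n)$ of $m$-ary partitions of $n$ onto the set \[ \mathcal{S}_m(n)=\{(\beta_j,\ldots,\beta_1)\in\mathbb{Z}^j:\,0\le\beta_j\le\alpha_j\text{ and }0\le\beta_t\le\alpha_t+m\beta_{t+1}\text{ for }1\le t\le j-1\}. \]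
   Context: An $m$-ary partition of $n$ is a partition of $n$ into powers of $m$, encoded as the sequence $(\lambda_\ell,\ldots,\lambda_0)$ of multiplicities, where $\lambda_i$ is the number of parts equal to $m^i$, $\lambda_\ell>0$ and $\lambda_i\ge0$; necessarily $\ell\le j$. $\mathcal{B}_m(n)$ is the set of all such partitions. *)

theory Defs
  imports Main
begin

text \<open>An m-ary partition of n, encoded by its multiplicity function:
  lam i = number of parts equal to m^i (finitely supported).  The sequence
  (lam_l,...,lam_0) with lam_l > 0 corresponds to lam with l the largest index
  of the support.\<close>
definition mary_partitions :: "nat \<Rightarrow> nat \<Rightarrow> (nat \<Rightarrow> nat) set" where
  "mary_partitions m n =
     {lam. finite {i. lam i \<noteq> 0} \<and> (\<Sum>i\<in>{i. lam i \<noteq> 0}. lam i * m ^ i) = n}"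

definition digit :: "nat \<Rightarrow> nat \<Rightarrow> nat \<Rightarrow> nat" where
  "digit m n i = (n div m ^ i) mod m"

text \<open>The map phi; a tuple (beta_j,...,beta_1) in Z^j is encoded as a function
  nat => int which is zero outside {1..j}.\<close>
definition phi :: "nat \<Rightarrow> nat \<Rightarrow> nat \<Rightarrow> (nat \<Rightarrow> nat) \<Rightarrow> (nat \<Rightarrow> int)" where
  "phi m n j lam = (\<lambda>i. if 1 \<le> i \<and> i \<le> j
       then (\<Sum>k=i..j. int m ^ (k - i) * (int (digit m n k) - int (lam k)))
       else 0)"

definition S_set :: "nat \<Rightarrow> nat \<Rightarrow> nat \<Rightarrow> (nat \<Rightarrow> int) set" where
  "S_set m n j = {beta. (\<forall>i. \<not> (1 \<le> i \<and> i \<le> j) \<longrightarrow> beta i = 0)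
      \<and> (1 \<le> j \<longrightarrow> 0 \<le> beta j \<and> beta j \<le> int (digit m n j))
      \<and> (\<forall>t. 1 \<le> t \<and> t \<le> j - 1 \<longrightarrow>
             0 \<le> beta t \<and> beta t \<le> int (digit m n t) + int m * beta (t + 1))}"

end

theory Submission
  imports Defs
begin

text \<open>Write \<open>B i = \<Sum>k=i..j. m^(k-i) (\<alpha>\<^sub>k - \<lambda>\<^sub>k)\<close>, so \<open>\<phi>(\<lambda>) = (B j, \<dots>, B 1)\<close>.
  Horner's rule gives \<open>B i = (\<alpha>\<^sub>i - \<lambda>\<^sub>i) + m B (i+1)\<close> and \<open>B 0 = n - \<Sum>\<^sub>k \<lambda>\<^sub>k m^k\<close>, so \<open>\<lambda>\<close>
  is a partition of \<open>n\<close> exactly when \<open>B 0 = 0\<close>, and then \<open>\<lambda>\<^sub>i = \<alpha>\<^sub>i + m B (i+1) - B i\<close>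
  recovers \<open>\<lambda>\<close> from \<open>\<phi>(\<lambda>)\<close>. Multiplicities are nonnegative iff \<open>B i \<le> \<alpha>\<^sub>i + m B (i+1)\<close>, and
  \<open>B t \<ge> 0\<close> holds because \<open>m^t B t = \<Sum>\<^sub>k\<^sub><\<^sub>t \<lambda>\<^sub>k m^k - (n mod m^t) > -m^t\<close>.\<close>

definition weighted_tail :: "nat \<Rightarrow> nat \<Rightarrow> (nat \<Rightarrow> int) \<Rightarrow> nat \<Rightarrow> int" where
  "weighted_tail m j a i = (\<Sum>k=i..j. int m ^ (k - i) * a k)"

definition digit_gap :: "nat \<Rightarrow> nat \<Rightarrow> (nat \<Rightarrow> nat) \<Rightarrow> nat \<Rightarrow> int" where
  "digit_gap m n lam k = int (digit m n k) - int (lam k)"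

lemma weighted_tail_greater: "j < i \<Longrightarrow> weighted_tail m j a i = 0"
  unfolding weighted_tail_def by simp

lemma weighted_tail_Suc:
  assumes "i \<le> j"
  shows "weighted_tail m j a i = a i + int m * weighted_tail m j a (Suc i)"
proof -
  have "{i..j} = insert i {Suc i..j}" using assms by auto
  then have "weighted_tail m j a i = a i + (\<Sum>k=Suc i..j. int m ^ (k - i) * a k)"
    unfolding weighted_tail_def by simp
  also have "(\<Sum>k=Suc i..j. int m ^ (k - i) * a k)
      = (\<Sum>k=Suc i..j. int m * (int m ^ (k - Suc i) * a k))"
  proof (rule sum.cong)
    fix k assume "k \<in> {Suc i..j}"
    then have "k - i = Suc (k - Suc i)" by auto
    then show "int m ^ (k - i) * a k = int m * (int m ^ (k - Suc i) * a k)" by simp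
  qed simp
  finally show ?thesis
    unfolding weighted_tail_def by (simp add: sum_distrib_left)
qed

lemma weighted_tail_0:
  assumes "t \<le> Suc j"
  shows "weighted_tail m j a 0 = (\<Sum>k<t. a k * int m ^ k) + int m ^ t * weighted_tail m j a t"
  using assms
proof (induction t)
  case (Suc t)
  then have "weighted_tail m j a t = a t + int m * weighted_tail m j a (Suc t)"
    by (intro weighted_tail_Suc) simp
  with Suc show ?case by (simp add: algebra_simps)
qed simp

lemma weighted_tail_0_eq_sum:
  "weighted_tail m j a 0 = (\<Sum>k<Suc j. a k * int m ^ k)"
  using weighted_tail_0[of "Suc j" j m a] weighted_tail_greater[of j "Suc j" m a] by simp

lemma sum_digits_eq_mod: "(\<Sum>i<k. digit m n i * m ^ i) = n mod m ^ k"
proof (induction k)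
  case (Suc k)
  have "n mod m ^ Suc k = m ^ k * (n div m ^ k mod m) + n mod m ^ k"
    by (metis mod_mult2_eq power_Suc2)
  with Suc show ?case by (simp add: digit_def mult.commute)
qed simp

lemma sum_digit_gap_eq:
  "(\<Sum>k<t. digit_gap m n lam k * int m ^ k) = int (n mod m ^ t) - int (\<Sum>k<t. lam k * m ^ k)"
  unfolding digit_gap_def sum_digits_eq_mod[symmetric]
  by (simp add: algebra_simps sum_subtractf)

lemma mary_partitions_iff:
  assumes "0 < m" "n < m ^ Suc j"
  shows "lam \<in> mary_partitions m n \<longleftrightarrow> (\<forall>k>j. lam k = 0) \<and> (\<Sum>k<Suc j. lam k * m ^ k) = n"
proof
  assume lam: "lam \<in> mary_partitions m n"
  let ?S = "{i. lam i \<noteq> 0}"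
  have fin: "finite ?S" and sum: "(\<Sum>i\<in>?S. lam i * m ^ i) = n"
    using lam unfolding mary_partitions_def by auto
  have vanish: "lam k = 0" if "j < k" for k
  proof (rule ccontr)
    assume "lam k \<noteq> 0"
    then have "m ^ k \<le> lam k * m ^ k" by simp
    also have "\<dots> \<le> n"
      using member_le_sum[OF _ _ fin, of k "\<lambda>i. lam i * m ^ i"] sum \<open>lam k \<noteq> 0\<close> by simp
    also have "\<dots> < m ^ Suc j" by (fact assms(2))
    also have "\<dots> \<le> m ^ k" using assms(1) that by (intro power_increasing) auto
    finally show False by simp
  qed
  then have "?S \<subseteq> {..<Suc j}" by (auto simp: not_less_eq[symmetric])
  then have "(\<Sum>i\<in>?S. lam i * m ^ i) = (\<Sum>k<Suc j. lam k * m ^ k)"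
    by (intro sum.mono_neutral_left) auto
  with sum vanish show "(\<forall>k>j. lam k = 0) \<and> (\<Sum>k<Suc j. lam k * m ^ k) = n" by simp
next
  assume "(\<forall>k>j. lam k = 0) \<and> (\<Sum>k<Suc j. lam k * m ^ k) = n"
  moreover from this have support: "{i. lam i \<noteq> 0} \<subseteq> {..<Suc j}"
    by (auto simp: not_less_eq[symmetric])
  moreover have "(\<Sum>i\<in>{i. lam i \<noteq> 0}. lam i * m ^ i) = (\<Sum>k<Suc j. lam k * m ^ k)"
    using support by (intro sum.mono_neutral_left) auto
  ultimately show "lam \<in> mary_partitions m n"
    unfolding mary_partitions_def by (auto intro: finite_subset)
qed

lemma phi_eq_weighted_tail:
  "phi m n j lam i = (if 1 \<le> i \<and> i \<le> j then weighted_tail m j (digit_gap m n lam) i else 0)"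
  unfolding phi_def weighted_tail_def digit_gap_def by simp

lemma weighted_tail_digit_gap_0:
  assumes "n < m ^ Suc j"
  shows "weighted_tail m j (digit_gap m n lam) 0 = int n - int (\<Sum>k<Suc j. lam k * m ^ k)"
  using assms by (simp add: weighted_tail_0_eq_sum sum_digit_gap_eq)

lemma partition_weighted_tail_0:
  assumes "0 < m" "n < m ^ Suc j" "lam \<in> mary_partitions m n"
  shows "weighted_tail m j (digit_gap m n lam) 0 = 0"
  using assms by (simp add: mary_partitions_iff weighted_tail_digit_gap_0)

lemma partition_weighted_tail_nonneg:
  assumes "0 < m" "n < m ^ Suc j" "lam \<in> mary_partitions m n" "t \<le> Suc j"
  shows "0 \<le> weighted_tail m j (digit_gap m n lam) t"
proof -
  let ?B = "weighted_tail m j (digit_gap m n lam) t"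
  have "int m ^ t * ?B = int (\<Sum>k<t. lam k * m ^ k) - int (n mod m ^ t)"
    using weighted_tail_0[OF assms(4), of m "digit_gap m n lam"]
      partition_weighted_tail_0[OF assms(1-3)] sum_digit_gap_eq[of m n lam t] by linarith
  moreover have "int (n mod m ^ t) < int m ^ t" using assms(1) by simp
  ultimately have "int m ^ t * ?B + int m ^ t > 0" by linarith
  then have "int m ^ t * (?B + 1) > 0" by (simp add: algebra_simps)
  then show ?thesis using assms(1) by (simp add: zero_less_mult_iff)
qed

lemma phi_mem_S_set:
  assumes "0 < m" "n < m ^ Suc j" "lam \<in> mary_partitions m n"
  shows "phi m n j lam \<in> S_set m n j"
proof -
  let ?B = "weighted_tail m j (digit_gap m n lam)"
  have step: "?B t \<le> int (digit m n t) + int m * ?B (Suc t)" if "t \<le> j" for t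
    using weighted_tail_Suc[OF that] by (simp add: digit_gap_def)
  have "?B j \<le> int (digit m n j)"
    using step[of j] weighted_tail_greater[of j "Suc j"] by simp
  with step show ?thesis
    using partition_weighted_tail_nonneg[OF assms]
    unfolding S_set_def phi_eq_weighted_tail by auto
qed

lemma partition_eq_weighted_tails:
  assumes "0 < m" "n < m ^ Suc j" "lam \<in> mary_partitions m n"
  shows "int (lam k) = (if k \<le> j then int (digit m n k) + int m *
      weighted_tail m j (digit_gap m n lam) (Suc k) - weighted_tail m j (digit_gap m n lam) k
    else 0)"
  using assms weighted_tail_Suc[of k j m "digit_gap m n lam"]
  by (auto simp: digit_gap_def mary_partitions_iff)

lemma phi_inj_on:
  assumes "0 < m" "n < m ^ Suc j"
  shows "inj_on (phi m n j) (mary_partitions m n)"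
proof (rule inj_onI)
  fix lam lam'
  assume lam: "lam \<in> mary_partitions m n" and lam': "lam' \<in> mary_partitions m n"
    and eq: "phi m n j lam = phi m n j lam'"
  have "weighted_tail m j (digit_gap m n lam) i = weighted_tail m j (digit_gap m n lam') i" for i
    using fun_cong[OF eq, of i] weighted_tail_greater[of j i]
      partition_weighted_tail_0[OF assms lam] partition_weighted_tail_0[OF assms lam']
    by (cases "i = 0") (auto simp: phi_eq_weighted_tail split: if_splits)
  then have "int (lam k) = int (lam' k)" for k
    by (simp add: partition_eq_weighted_tails[OF assms lam] partition_eq_weighted_tails[OF assms lam'])
  then show "lam = lam'" by auto
qed

definition phi_inv :: "nat \<Rightarrow> nat \<Rightarrow> nat \<Rightarrow> (nat \<Rightarrow> int) \<Rightarrow> nat \<Rightarrow> nat" where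
  "phi_inv m n j beta k =
     (if k \<le> j then nat (int (digit m n k) + int m * beta (Suc k) - beta k) else 0)"

lemma S_set_vanish: "beta \<in> S_set m n j \<Longrightarrow> \<not> (1 \<le> i \<and> i \<le> j) \<Longrightarrow> beta i = 0"
  unfolding S_set_def by blast

lemma S_set_nonneg: "beta \<in> S_set m n j \<Longrightarrow> 0 \<le> beta i"
  unfolding S_set_def
  by (cases "1 \<le> i \<and> i \<le> j - 1"; cases "i = j"; cases "1 \<le> i \<and> i \<le> j") auto

lemma S_set_le_step:
  assumes "beta \<in> S_set m n j" "k \<le> j"
  shows "beta k \<le> int (digit m n k) + int m * beta (Suc k)"
proof -
  consider "k = 0" | "1 \<le> k \<and> k \<le> j - 1" | "1 \<le> k \<and> k = j" using assms(2) by linarith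
  then show ?thesis
  proof cases
    case 1
    then show ?thesis using assms S_set_nonneg[OF assms(1), of 1] S_set_vanish[of beta] by simp
  next
    case 2
    then show ?thesis using assms(1) unfolding S_set_def by simp
  next
    case 3
    then show ?thesis using assms(1) S_set_vanish[OF assms(1), of "Suc j"] unfolding S_set_def by simp
  qed
qed

lemma int_phi_inv:
  assumes "beta \<in> S_set m n j" "k \<le> j"
  shows "int (phi_inv m n j beta k)
    = int (digit m n k) + int m * beta (Suc k) - beta k"
  using S_set_le_step[OF assms] assms(2) by (simp add: phi_inv_def)

lemma weighted_tail_phi_inv:
  assumes "beta \<in> S_set m n j" "1 \<le> i" "i \<le> Suc j"
  shows "weighted_tail m j (digit_gap m n (phi_inv m n j beta)) i = beta i"
  using assms(3,2)
proof (induction rule: inc_induct)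
  case base
  then show ?case using S_set_vanish[OF assms(1), of "Suc j"] by (simp add: weighted_tail_greater)
next
  case (step k)
  then show ?case
    using weighted_tail_Suc[of k j m] int_phi_inv[OF assms(1), of k] by (simp add: digit_gap_def)
qed

lemma phi_inv_mem_mary_partitions:
  assumes "0 < m" "n < m ^ Suc j" "beta \<in> S_set m n j"
  shows "phi_inv m n j beta \<in> mary_partitions m n"
proof -
  let ?lam = "phi_inv m n j beta"
  have "weighted_tail m j (digit_gap m n ?lam) 0 = 0"
    using weighted_tail_Suc[of 0 j m] weighted_tail_phi_inv[OF assms(3), of 1]
      int_phi_inv[OF assms(3), of 0] S_set_vanish[OF assms(3), of 0] by (simp add: digit_gap_def)
  then have "int (\<Sum>k<Suc j. ?lam k * m ^ k) = int n"
    using weighted_tail_digit_gap_0[OF assms(2)] by simp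
  moreover have "\<forall>k>j. ?lam k = 0" by (simp add: phi_inv_def)
  ultimately show ?thesis
    using assms(1,2) by (simp only: mary_partitions_iff of_nat_eq_iff)
qed

lemma phi_phi_inv:
  assumes "beta \<in> S_set m n j"
  shows "phi m n j (phi_inv m n j beta) = beta"
proof
  fix i
  show "phi m n j (phi_inv m n j beta) i = beta i"
    using weighted_tail_phi_inv[OF assms, of i] S_set_vanish[OF assms, of i]
    by (auto simp: phi_eq_weighted_tail)
qed

theorem theorem2p2:
  fixes m n j :: nat
  assumes "m \<ge> 2" and "n > 0" and "m ^ j \<le> n" and "n < m ^ (j + 1)"
  shows "bij_betw (phi m n j) (mary_partitions m n) (S_set m n j)"
proof -
  have m: "0 < m" and n: "n < m ^ Suc j" using assms(1,4) by simp_all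
  have "S_set m n j \<subseteq> phi m n j ` mary_partitions m n"
  proof
    fix beta assume "beta \<in> S_set m n j"
    then show "beta \<in> phi m n j ` mary_partitions m n"
      using phi_phi_inv phi_inv_mem_mary_partitions[OF m n] by (metis image_eqI)
  qed
  then show ?thesis
    unfolding bij_betw_def using phi_inj_on[OF m n] phi_mem_S_set[OF m n] by blast
qed

end
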